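(* Let $\Gamma$ be a connected algebraic group defined over $\mathbb F_q$ with Frobenius map $F$, and $H$ a connected $F$-stable closed subgroup of $\Gamma$. Then the twisting operators commute with induction: for every class function $f$ on $H^F$, $t_1^*(\mathrm{Ind}_{H^F}^{\Gamma^F}f)=\mathrm{Ind}_{H^F}^{\Gamma^F}(t_1^*f)$, where on the left $t_1^*$ is the twisting operator of $\Gamma^F$ and on the right that of $H^F$.
   Context: Twisting operator for a connected group $X$ with Frobenius $F$: for $x\in X^F$ choose $\alpha\in X$ with $x=\alpha^{-1}F(\alpha)$; then $F(\alpha)\alpha^{-1}\in X^F$ and its $X^F$-conjugacy class depends only on that of $x$; $t_1^*$ is the linear operator on class functions of $X^F$ given by $t_1^*(h)(x)=h(F(\alpha)\alpha^{-1})$. *)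

theory Defs
  imports "HOL-Algebra.Algebra" Complex_Main
begin

text \<open>Abstract model: a group G (the points of the algebraic group over the
algebraic closure) with an endomorphism F (Frobenius).  The rational points
are the fixed points of F.\<close>

definition fixpts :: "('a, 'b) monoid_scheme \<Rightarrow> ('a \<Rightarrow> 'a) \<Rightarrow> 'a set" where
  "fixpts G F = {x \<in> carrier G. F x = x}"

text \<open>Lang's theorem for (G,F): every rational point has the form inv a * F a.\<close>
definition lang_property :: "('a, 'b) monoid_scheme \<Rightarrow> ('a \<Rightarrow> 'a) \<Rightarrow> bool" where
  "lang_property G F \<longleftrightarrow>
     (\<forall>x \<in> fixpts G F. \<exists>a \<in> carrier G. x = inv\<^bsub>G\<^esub> a \<otimes>\<^bsub>G\<^esub> F a)"

definition class_function :: "('a, 'b) monoid_scheme \<Rightarrow> ('a \<Rightarrow> 'a) \<Rightarrow> ('a \<Rightarrow> complex) \<Rightarrow> bool" where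
  "class_function G F f \<longleftrightarrow>
     (\<forall>g \<in> fixpts G F. \<forall>x \<in> fixpts G F. f (g \<otimes>\<^bsub>G\<^esub> x \<otimes>\<^bsub>G\<^esub> inv\<^bsub>G\<^esub> g) = f x)"

definition twist :: "('a, 'b) monoid_scheme \<Rightarrow> ('a \<Rightarrow> 'a) \<Rightarrow> ('a \<Rightarrow> complex) \<Rightarrow> 'a \<Rightarrow> complex" where
  "twist G F h x =
     (let a = (SOME a. a \<in> carrier G \<and> x = inv\<^bsub>G\<^esub> a \<otimes>\<^bsub>G\<^esub> F a)
      in h (F a \<otimes>\<^bsub>G\<^esub> inv\<^bsub>G\<^esub> a))"

definition induce :: "('a, 'b) monoid_scheme \<Rightarrow> ('a \<Rightarrow> 'a) \<Rightarrow> 'a set \<Rightarrow> ('a \<Rightarrow> complex) \<Rightarrow> 'a \<Rightarrow> complex" where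
  "induce G F H f g =
     (1 / of_nat (card (fixpts (G\<lparr>carrier := H\<rparr>) F))) *
     (\<Sum>x \<in> fixpts G F.
        if x \<otimes>\<^bsub>G\<^esub> g \<otimes>\<^bsub>G\<^esub> inv\<^bsub>G\<^esub> x \<in> H
        then f (x \<otimes>\<^bsub>G\<^esub> g \<otimes>\<^bsub>G\<^esub> inv\<^bsub>G\<^esub> x) else 0)"

end

theory Submission
  imports Defs
begin

text \<open>Write \<open>g = a\<inverse> F(a)\<close>, so that \<open>t\<^sub>1\<^sup>*(Ind f)(g) = Ind f(F(a) a\<inverse>)\<close>. Both sides of the
identity are then sums over \<open>\<Gamma>\<^sup>F\<close>: of \<open>f\<close> at the conjugates \<open>x F(a) a\<inverse> x\<inverse>\<close>, and of
\<open>t\<^sub>1\<^sup>* f\<close> at the conjugates \<open>y g y\<inverse>\<close>. Call \<open>x\<close> and \<open>y\<close> related if \<open>c = x a y\<inverse> \<in> H\<close>; the two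
conjugates are then \<open>F(c) c\<inverse>\<close> and \<open>c\<inverse> F(c)\<close>, so related terms agree by the definition of
\<open>t\<^sub>1\<^sup>*\<close> on \<open>H\<^sup>F\<close>. Lang's theorem for \<open>H\<close> shows that every index carrying a nonzero term is
related to some index on the other side, hence to exactly \<open>|H\<^sup>F|\<close> of them (a coset of
\<open>H\<^sup>F\<close>), and double counting the related pairs proves the identity.\<close>

lemma sum_eq_by_double_counting:
  fixes T :: "'a \<Rightarrow> 'c::field_char_0" and U :: "'b \<Rightarrow> 'c"
  assumes "finite A" "finite B" "k \<noteq> 0"
    and fibre_T: "\<And>x. x \<in> A \<Longrightarrow> T x \<noteq> 0 \<Longrightarrow> card {y \<in> B. R x y} = k"
    and fibre_U: "\<And>y. y \<in> B \<Longrightarrow> U y \<noteq> 0 \<Longrightarrow> card {x \<in> A. R x y} = k"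
    and related: "\<And>x y. x \<in> A \<Longrightarrow> y \<in> B \<Longrightarrow> R x y \<Longrightarrow> T x = U y"
  shows "sum T A = sum U B"
proof -
  have "of_nat k * sum T A = (\<Sum>x\<in>A. \<Sum>y\<in>{y \<in> B. R x y}. T x)"
    unfolding sum_distrib_left by (rule sum.cong) (auto dest: fibre_T)
  also have "\<dots> = (\<Sum>x\<in>A. \<Sum>y\<in>{y \<in> B. R x y}. U y)"
    using related by (intro sum.cong) auto
  also have "\<dots> = (\<Sum>y\<in>B. \<Sum>x\<in>{x \<in> A. R x y}. U y)"
    using assms(1,2) by (rule sum.swap_restrict)
  also have "\<dots> = of_nat k * sum U B"
    unfolding sum_distrib_left by (rule sum.cong) (auto dest: fibre_U)
  finally show ?thesis
    using assms(3) by simp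
qed

lemma twistE:
  assumes "a \<in> carrier G" "g = inv\<^bsub>G\<^esub> a \<otimes>\<^bsub>G\<^esub> F a"
  obtains b where "b \<in> carrier G" "g = inv\<^bsub>G\<^esub> b \<otimes>\<^bsub>G\<^esub> F b"
    "twist G F h g = h (F b \<otimes>\<^bsub>G\<^esub> inv\<^bsub>G\<^esub> b)"
proof
  let ?b = "SOME b. b \<in> carrier G \<and> g = inv\<^bsub>G\<^esub> b \<otimes>\<^bsub>G\<^esub> F b"
  have "\<exists>b. b \<in> carrier G \<and> g = inv\<^bsub>G\<^esub> b \<otimes>\<^bsub>G\<^esub> F b"
    using assms by auto
  then have "?b \<in> carrier G \<and> g = inv\<^bsub>G\<^esub> ?b \<otimes>\<^bsub>G\<^esub> F ?b"
    by (rule someI_ex)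
  then show "?b \<in> carrier G" "g = inv\<^bsub>G\<^esub> ?b \<otimes>\<^bsub>G\<^esub> F ?b"
    by auto
  show "twist G F h g = h (F ?b \<otimes>\<^bsub>G\<^esub> inv\<^bsub>G\<^esub> ?b)"
    unfolding twist_def Let_def by (rule refl)
qed

context group
begin

lemma mult_inv_cancel_left [simp]: "x \<in> carrier G \<Longrightarrow> y \<in> carrier G \<Longrightarrow> x \<otimes> (inv x \<otimes> y) = y"
  by (simp add: m_assoc [symmetric])

lemma inv_mult_cancel_left [simp]: "x \<in> carrier G \<Longrightarrow> y \<in> carrier G \<Longrightarrow> inv x \<otimes> (x \<otimes> y) = y"
  by (simp add: m_assoc [symmetric])

lemma card_mult_mem_subgroup:
  assumes S: "subgroup S G" and H: "subgroup H G"
    and "x\<^sub>0 \<in> S" "b \<in> carrier G" "x\<^sub>0 \<otimes> b \<in> H"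
  shows "card {x \<in> S. x \<otimes> b \<in> H} = card (S \<inter> H)"
proof -
  interpret S: subgroup S G by (fact S)
  interpret H: subgroup H G by (fact H)
  have "bij_betw (\<lambda>k. k \<otimes> x\<^sub>0) (S \<inter> H) {x \<in> S. x \<otimes> b \<in> H}"
  proof (rule bij_betw_byWitness[where f' = "\<lambda>x. x \<otimes> inv x\<^sub>0"])
    show "(\<lambda>x. x \<otimes> inv x\<^sub>0) ` {x \<in> S. x \<otimes> b \<in> H} \<subseteq> S \<inter> H"
    proof (intro image_subsetI IntI)
      fix x assume x: "x \<in> {x \<in> S. x \<otimes> b \<in> H}"
      then show "x \<otimes> inv x\<^sub>0 \<in> S"
        using assms by auto
      have "(x \<otimes> b) \<otimes> inv (x\<^sub>0 \<otimes> b) \<in> H"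
        using x assms by auto
      then show "x \<otimes> inv x\<^sub>0 \<in> H"
        using x assms by (simp add: m_assoc inv_mult_group)
    qed
  qed (use assms in \<open>auto simp: m_assoc\<close>)
  then show ?thesis
    by (simp add: bij_betw_same_card)
qed

end

locale group_endo = group G for G (structure) +
  fixes F
  assumes F_hom: "F \<in> hom G G"
begin

lemma F_closed [simp]: "x \<in> carrier G \<Longrightarrow> F x \<in> carrier G"
  using F_hom by (simp add: hom_def Pi_def)

lemma F_mult [simp]: "x \<in> carrier G \<Longrightarrow> y \<in> carrier G \<Longrightarrow> F (x \<otimes> y) = F x \<otimes> F y"
  using F_hom by (simp add: hom_mult)

lemma F_inv [simp]: "x \<in> carrier G \<Longrightarrow> F (inv x) = inv (F x)"
  using F_hom group_axioms by (simp add: group_hom_def group_hom_axioms_def group_hom.hom_inv)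

lemma F_one [simp]: "F \<one> = \<one>"
  using F_hom group_axioms by (simp add: hom_one)

lemma fixpts_subgroup: "subgroup (fixpts G F) G"
  by (rule subgroupI) (auto simp: fixpts_def)

lemma F_mult_inv_fixed:
  assumes u: "u \<in> carrier G" and fixed: "inv u \<otimes> F u \<in> fixpts G F"
  shows "F u \<otimes> inv u \<in> fixpts G F"
proof -
  have "inv (F u) \<otimes> F (F u) = inv u \<otimes> F u"
    using fixed u by (simp add: fixpts_def)
  then have "F (F u) = F u \<otimes> (inv u \<otimes> F u)"
    using u by (simp add: inv_solve_left')
  then show ?thesis
    using u by (simp add: fixpts_def m_assoc)
qed

text \<open>Two solutions \<open>u\<close>, \<open>v\<close> of Lang's equation differ by the rational point \<open>v u\<inverse>\<close>,
  which conjugates \<open>F(u) u\<inverse>\<close> into \<open>F(v) v\<inverse>\<close>: this is why \<open>t\<^sub>1\<^sup>*\<close> is well defined on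
  class functions.\<close>

lemma twist_inv_mult_F:
  assumes h: "class_function G F h" and u: "u \<in> carrier G" "inv u \<otimes> F u \<in> fixpts G F"
  shows "twist G F h (inv u \<otimes> F u) = h (F u \<otimes> inv u)"
proof -
  obtain v where v: "v \<in> carrier G" "inv u \<otimes> F u = inv v \<otimes> F v"
    and twist_v: "twist G F h (inv u \<otimes> F u) = h (F v \<otimes> inv v)"
    using twistE[OF u(1) refl] .
  have F_v: "F v = v \<otimes> (inv u \<otimes> F u)"
    using v u by (simp add: inv_solve_left')
  have "v \<otimes> inv u \<in> fixpts G F"
    using v(1) u(1) by (simp add: fixpts_def inv_mult_group F_v m_assoc)
  moreover have "F v \<otimes> inv v = (v \<otimes> inv u) \<otimes> (F u \<otimes> inv u) \<otimes> inv (v \<otimes> inv u)"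
    using v(1) u(1) by (simp add: m_assoc inv_mult_group F_v)
  moreover have "F u \<otimes> inv u \<in> fixpts G F"
    using u by (rule F_mult_inv_fixed)
  ultimately show ?thesis
    using h twist_v by (simp add: class_function_def)
qed

lemma lang_property_right:
  assumes "lang_property G F" "z \<in> fixpts G F"
  shows "\<exists>c \<in> carrier G. z = F c \<otimes> inv c"
proof -
  have "inv z \<in> fixpts G F"
    by (rule subgroup.m_inv_closed[OF fixpts_subgroup assms(2)])
  then obtain d where d: "d \<in> carrier G" "inv z = inv d \<otimes> F d"
    using assms(1) by (auto simp: lang_property_def)
  have "z = inv (inv z)"
    using assms(2) by (simp add: fixpts_def)
  also have "\<dots> = F (inv d) \<otimes> inv (inv d)"
    using d by (simp add: inv_mult_group)
  finally show ?thesis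
    using d(1) by blast
qed

end

locale group_endo_subgroup = group_endo +
  fixes H
  assumes H_subgroup: "subgroup H G" and F_H: "F ` H \<subseteq> H"
begin

sublocale H: subgroup H G
  by (fact H_subgroup)

lemma F_mem_H [simp]: "x \<in> H \<Longrightarrow> F x \<in> H"
  using F_H by blast

lemma inv_mem_H_iff: "x \<in> carrier G \<Longrightarrow> inv x \<in> H \<longleftrightarrow> x \<in> H"
  by (metis H.m_inv_closed inv_inv)

lemma group_endo_restrict: "group_endo (G\<lparr>carrier := H\<rparr>) F"
  using H.subgroup_is_group[OF group_axioms]
  by (auto simp: group_endo_def group_endo_axioms_def hom_def)

lemma fixpts_restrict: "fixpts (G\<lparr>carrier := H\<rparr>) F = fixpts G F \<inter> H"
  by (auto simp: fixpts_def)

lemma twist_restrict: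
  assumes "class_function (G\<lparr>carrier := H\<rparr>) F f" "c \<in> H" "inv c \<otimes> F c \<in> fixpts G F"
  shows "twist (G\<lparr>carrier := H\<rparr>) F f (inv c \<otimes> F c) = f (F c \<otimes> inv c)"
  using group_endo.twist_inv_mult_F[OF group_endo_restrict assms(1), of c] assms(2,3)
  by (simp add: fixpts_restrict H_subgroup)

lemma card_fixpts_mult_mem:
  assumes lang: "lang_property (G\<lparr>carrier := H\<rparr>) F"
    and c: "c \<in> carrier G" "inv c \<otimes> F c \<in> fixpts G F \<inter> H"
  shows "card {x \<in> fixpts G F. x \<otimes> c \<in> H} = card (fixpts (G\<lparr>carrier := H\<rparr>) F)"
proof -
  obtain d where d: "d \<in> H" "inv c \<otimes> F c = inv d \<otimes> F d"
    using lang c(2) by (auto simp: lang_property_def fixpts_restrict H_subgroup)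
  have "F d = d \<otimes> (inv c \<otimes> F c)"
    using d c(1) by (simp add: inv_solve_left')
  then have "d \<otimes> inv c \<in> fixpts G F"
    using d(1) c(1) by (simp add: fixpts_def m_assoc inv_mult_group)
  moreover have "d \<otimes> inv c \<otimes> c \<in> H"
    using d(1) c(1) by (simp add: m_assoc)
  ultimately show ?thesis
    using card_mult_mem_subgroup[OF fixpts_subgroup H_subgroup, of "d \<otimes> inv c" c] c(1)
    by (simp add: fixpts_restrict)
qed

lemma card_fixpts_mult_inv_mem:
  assumes lang: "lang_property (G\<lparr>carrier := H\<rparr>) F"
    and b: "b \<in> carrier G" "inv b \<otimes> F b \<in> fixpts G F" "F b \<otimes> inv b \<in> H"
  shows "card {y \<in> fixpts G F. b \<otimes> inv y \<in> H} = card (fixpts (G\<lparr>carrier := H\<rparr>) F)"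
proof -
  have "F b \<otimes> inv b \<in> fixpts (G\<lparr>carrier := H\<rparr>) F"
    using b F_mult_inv_fixed by (simp add: fixpts_restrict)
  then obtain c where c: "c \<in> H" "F b \<otimes> inv b = F c \<otimes> inv c"
    using group_endo.lang_property_right[OF group_endo_restrict lang] by (auto simp: H_subgroup)
  have "F b = F c \<otimes> (inv c \<otimes> b)"
    using c b(1) by (simp add: inv_solve_right' m_assoc)
  then have "inv c \<otimes> b \<in> fixpts G F"
    using c(1) b(1) by (simp add: fixpts_def)
  moreover have "inv c \<otimes> b \<otimes> inv b \<in> H"
    using c(1) b(1) by (simp add: m_assoc)
  moreover have "b \<otimes> inv y \<in> H \<longleftrightarrow> y \<otimes> inv b \<in> H" if "y \<in> carrier G" for y
  proof -
    have "inv (b \<otimes> inv y) = y \<otimes> inv b"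
      using that b(1) by (simp add: inv_mult_group)
    then show ?thesis
      using inv_mem_H_iff[of "b \<otimes> inv y"] that b(1) by simp
  qed
  then have "{y \<in> fixpts G F. b \<otimes> inv y \<in> H} = {y \<in> fixpts G F. y \<otimes> inv b \<in> H}"
    by (auto simp: fixpts_def)
  ultimately show ?thesis
    using card_mult_mem_subgroup[OF fixpts_subgroup H_subgroup, of "inv c \<otimes> b" "inv b"] b(1)
    by (simp add: fixpts_restrict)
qed

lemma card_fixpts_restrict_nonzero:
  assumes "finite (fixpts G F)"
  shows "card (fixpts (G\<lparr>carrier := H\<rparr>) F) \<noteq> 0"
proof -
  have "\<one> \<in> fixpts G F \<inter> H"
    by (simp add: fixpts_def)
  moreover have "finite (fixpts G F \<inter> H)"
    using assms by simp
  ultimately show ?thesis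
    by (metis card_0_eq empty_iff fixpts_restrict)
qed

lemma related_conjugatesE:
  assumes "a \<in> carrier G" "x \<in> fixpts G F" "y \<in> fixpts G F" "x \<otimes> a \<otimes> inv y \<in> H"
  obtains c where "c \<in> H"
    "x \<otimes> (F a \<otimes> inv a) \<otimes> inv x = F c \<otimes> inv c"
    "y \<otimes> (inv a \<otimes> F a) \<otimes> inv y = inv c \<otimes> F c"
proof
  show "x \<otimes> a \<otimes> inv y \<in> H"
    by (fact assms(4))
  show "x \<otimes> (F a \<otimes> inv a) \<otimes> inv x = F (x \<otimes> a \<otimes> inv y) \<otimes> inv (x \<otimes> a \<otimes> inv y)"
    using assms(1-3) by (simp add: fixpts_def m_assoc inv_mult_group)
  show "y \<otimes> (inv a \<otimes> F a) \<otimes> inv y = inv (x \<otimes> a \<otimes> inv y) \<otimes> F (x \<otimes> a \<otimes> inv y)"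
    using assms(1-3) by (simp add: fixpts_def m_assoc inv_mult_group)
qed

lemma induce_at_F_mult_inv:
  assumes fin: "finite (fixpts G F)" and lang: "lang_property (G\<lparr>carrier := H\<rparr>) F"
    and f: "class_function (G\<lparr>carrier := H\<rparr>) F f"
    and a: "a \<in> carrier G" and g: "inv a \<otimes> F a \<in> fixpts G F"
  shows "induce G F H f (F a \<otimes> inv a) = induce G F H (twist (G\<lparr>carrier := H\<rparr>) F f) (inv a \<otimes> F a)"
proof -
  define T where "T x = (if x \<otimes> (F a \<otimes> inv a) \<otimes> inv x \<in> H
    then f (x \<otimes> (F a \<otimes> inv a) \<otimes> inv x) else 0)" for x
  define U where "U y = (if y \<otimes> (inv a \<otimes> F a) \<otimes> inv y \<in> H
    then twist (G\<lparr>carrier := H\<rparr>) F f (y \<otimes> (inv a \<otimes> F a) \<otimes> inv y) else 0)" for y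
  have conj_fixed: "y \<otimes> (inv a \<otimes> F a) \<otimes> inv y \<in> fixpts G F" if "y \<in> fixpts G F" for y
    using that g fixpts_subgroup by (simp add: subgroup.m_closed subgroup.m_inv_closed)
  have "sum T (fixpts G F) = sum U (fixpts G F)"
  proof (rule sum_eq_by_double_counting[where R = "\<lambda>x y. x \<otimes> a \<otimes> inv y \<in> H"])
    show "card (fixpts (G\<lparr>carrier := H\<rparr>) F) \<noteq> 0"
      using fin by (rule card_fixpts_restrict_nonzero)
  next
    fix x assume x: "x \<in> fixpts G F" "T x \<noteq> 0"
    then have "F (x \<otimes> a) \<otimes> inv (x \<otimes> a) \<in> H"
      using a by (auto simp: T_def fixpts_def m_assoc inv_mult_group split: if_splits)
    moreover have "inv (x \<otimes> a) \<otimes> F (x \<otimes> a) \<in> fixpts G F"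
      using x(1) a g by (simp add: fixpts_def m_assoc inv_mult_group)
    ultimately show "card {y \<in> fixpts G F. x \<otimes> a \<otimes> inv y \<in> H} = card (fixpts (G\<lparr>carrier := H\<rparr>) F)"
      using card_fixpts_mult_inv_mem[OF lang] x(1) a by (simp add: fixpts_def)
  next
    fix y assume y: "y \<in> fixpts G F" "U y \<noteq> 0"
    then have "y \<otimes> (inv a \<otimes> F a) \<otimes> inv y \<in> fixpts G F \<inter> H"
      using conj_fixed by (auto simp: U_def split: if_splits)
    moreover have "y \<otimes> (inv a \<otimes> F a) \<otimes> inv y = inv (a \<otimes> inv y) \<otimes> F (a \<otimes> inv y)"
      using y(1) a by (simp add: fixpts_def m_assoc inv_mult_group)
    ultimately have "inv (a \<otimes> inv y) \<otimes> F (a \<otimes> inv y) \<in> fixpts G F \<inter> H"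
      by simp
    then have "card {x \<in> fixpts G F. x \<otimes> (a \<otimes> inv y) \<in> H} = card (fixpts (G\<lparr>carrier := H\<rparr>) F)"
      using card_fixpts_mult_mem[OF lang] y(1) a by (simp add: fixpts_def)
    then show "card {x \<in> fixpts G F. x \<otimes> a \<otimes> inv y \<in> H} = card (fixpts (G\<lparr>carrier := H\<rparr>) F)"
      using y(1) a by (simp add: fixpts_def m_assoc cong: conj_cong)
  next
    fix x y assume x: "x \<in> fixpts G F" and y: "y \<in> fixpts G F"
      and related: "x \<otimes> a \<otimes> inv y \<in> H"
    obtain c where c_H: "c \<in> H"
      and F_mult_inv_c: "x \<otimes> (F a \<otimes> inv a) \<otimes> inv x = F c \<otimes> inv c"
      and inv_mult_F_c: "y \<otimes> (inv a \<otimes> F a) \<otimes> inv y = inv c \<otimes> F c"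
      using related_conjugatesE[OF a x y related] .
    have "twist (G\<lparr>carrier := H\<rparr>) F f (inv c \<otimes> F c) = f (F c \<otimes> inv c)"
      using twist_restrict[OF f c_H] conj_fixed[OF y] by (simp add: inv_mult_F_c)
    then show "T x = U y"
      using c_H by (simp add: T_def U_def F_mult_inv_c inv_mult_F_c)
  qed (use fin in auto)
  then show ?thesis
    by (simp add: induce_def T_def U_def)
qed

end

theorem lemma3p7:
  fixes G :: "('a, 'b) monoid_scheme" and F :: "'a \<Rightarrow> 'a" and H :: "'a set"
    and f :: "'a \<Rightarrow> complex"
  assumes "group G"
    and "F \<in> hom G G"
    and "subgroup H G"
    and "F ` H \<subseteq> H"
    and "finite (fixpts G F)"
    and "lang_property G F"
    and "lang_property (G\<lparr>carrier := H\<rparr>) F"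
    and "class_function (G\<lparr>carrier := H\<rparr>) F f"
  shows "\<forall>g \<in> fixpts G F.
           twist G F (induce G F H f) g = induce G F H (twist (G\<lparr>carrier := H\<rparr>) F f) g"
proof
  fix g assume g: "g \<in> fixpts G F"
  interpret group_endo_subgroup G F H
    using assms(1-4) by (simp add: group_endo_subgroup_def group_endo_def group_endo_axioms_def
        group_endo_subgroup_axioms_def)
  obtain a where "a \<in> carrier G" "g = inv\<^bsub>G\<^esub> a \<otimes>\<^bsub>G\<^esub> F a"
    using assms(6) g by (auto simp: lang_property_def)
  then obtain b where b: "b \<in> carrier G" "g = inv\<^bsub>G\<^esub> b \<otimes>\<^bsub>G\<^esub> F b"
    and "twist G F (induce G F H f) g = induce G F H f (F b \<otimes>\<^bsub>G\<^esub> inv\<^bsub>G\<^esub> b)"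
    by (rule twistE)
  with g show "twist G F (induce G F H f) g = induce G F H (twist (G\<lparr>carrier := H\<rparr>) F f) g"
    using induce_at_F_mult_inv[OF assms(5,7,8) b(1)] by simp
qed

end
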